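(* Let $X\neq\emptyset$ be countable, $F=(F_x)_{x\in X}$ a family of finite-dimensional complex vector spaces, and $A\colon\Gamma(X;F)\to\Gamma(X;F)$ a continuous linear operator whose dual operator $A'\colon\Gamma_c(X;F')\to\Gamma_c(X;F')$ is injective. Then for every finite nonempty $K\subseteq X$ there exist $\varepsilon>0$ and a finite nonempty $K'\subseteq X$ such that $A(U_K)\supseteq\varepsilon U_{K'}$.
   Context: $\Gamma(X;F)=\prod_x F_x$ carries the product topology, i.e. the topology generated by seminorms $p_K(f)=\sum_{x\in K}\|f(x)\|_x$ for finite $K\subseteq X$, with $\|\cdot\|_x$ a fixed norm on $F_x$. $U_K:=\{f\in\Gamma(X;F)\mid p_K(f)\le1\}$. $\Gamma_c(X;F')$ is the space of finitely supported sections of the dual bundle $F'=(F'_x)$, identified with the continuous dual of $\Gamma(X;F)$ via $(\varphi,f)=\sum_x\varphi(x)(f(x))$; the dual operator is defined by $(A'\varphi,f)=(\varphi,Af)$. *)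

theory Defs
  imports "HOL-Analysis.Analysis" "HOL-Library.Countable"
begin

text \<open>
  Model: the finite-dimensional complex vector space F_x of dimension d x is
  represented as the coordinate space of vectors v :: nat \<Rightarrow> complex
  with v i = 0 for i \<ge> d x.
  The product topology on Gamma is the subspace topology of the product
  (function) topology on 'x \<Rightarrow> nat \<Rightarrow> complex.
  The dual space F_x' is represented by coefficient vectors
  (phi x :: nat \<Rightarrow> complex, zero beyond d x), acting by
  v \<mapsto> sum_{i<d x} phi x i * v i.
\<close>

definition fibre :: "('x \<Rightarrow> nat) \<Rightarrow> 'x \<Rightarrow> (nat \<Rightarrow> complex) set" where
  "fibre d x = {v. \<forall>i\<ge>d x. v i = 0}"

definition sections :: "('x \<Rightarrow> nat) \<Rightarrow> ('x \<Rightarrow> nat \<Rightarrow> complex) set" where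
  "sections d = {f. \<forall>x. f x \<in> fibre d x}"

definition csections_dual :: "('x \<Rightarrow> nat) \<Rightarrow> ('x \<Rightarrow> nat \<Rightarrow> complex) set" where
  "csections_dual d = {phi. (\<forall>x. phi x \<in> fibre d x) \<and> finite {x. phi x \<noteq> (\<lambda>_. 0)}}"

definition pairing :: "('x \<Rightarrow> nat) \<Rightarrow> ('x \<Rightarrow> nat \<Rightarrow> complex) \<Rightarrow> ('x \<Rightarrow> nat \<Rightarrow> complex) \<Rightarrow> complex" where
  "pairing d phi f = (\<Sum>x\<in>{x. phi x \<noteq> (\<lambda>_. 0)}. \<Sum>i<d x. phi x i * f x i)"

definition dual_op :: "('x \<Rightarrow> nat) \<Rightarrow> (('x \<Rightarrow> nat \<Rightarrow> complex) \<Rightarrow> ('x \<Rightarrow> nat \<Rightarrow> complex))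
     \<Rightarrow> ('x \<Rightarrow> nat \<Rightarrow> complex) \<Rightarrow> ('x \<Rightarrow> nat \<Rightarrow> complex)" where
  "dual_op d A phi = (THE psi. psi \<in> csections_dual d \<and>
      (\<forall>f\<in>sections d. pairing d psi f = pairing d phi (A f)))"

definition linear_on_sections :: "('x \<Rightarrow> nat) \<Rightarrow> (('x \<Rightarrow> nat \<Rightarrow> complex) \<Rightarrow> ('x \<Rightarrow> nat \<Rightarrow> complex)) \<Rightarrow> bool" where
  "linear_on_sections d A \<longleftrightarrow>
     (\<forall>f\<in>sections d. \<forall>g\<in>sections d. A (\<lambda>x i. f x i + g x i) = (\<lambda>x i. A f x i + A g x i)) \<and>
     (\<forall>c. \<forall>f\<in>sections d. A (\<lambda>x i. c * f x i) = (\<lambda>x i. c * A f x i))"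

definition is_norm_on :: "(nat \<Rightarrow> complex) set \<Rightarrow> ((nat \<Rightarrow> complex) \<Rightarrow> real) \<Rightarrow> bool" where
  "is_norm_on V N \<longleftrightarrow>
     (\<forall>v\<in>V. 0 \<le> N v) \<and>
     (\<forall>v\<in>V. N v = 0 \<longleftrightarrow> v = (\<lambda>_. 0)) \<and>
     (\<forall>c. \<forall>v\<in>V. N (\<lambda>i. c * v i) = cmod c * N v) \<and>
     (\<forall>v\<in>V. \<forall>w\<in>V. N (\<lambda>i. v i + w i) \<le> N v + N w)"

definition seminorm_K :: "(('x \<Rightarrow> (nat \<Rightarrow> complex) \<Rightarrow> real)) \<Rightarrow> 'x set \<Rightarrow> ('x \<Rightarrow> nat \<Rightarrow> complex) \<Rightarrow> real" where
  "seminorm_K N K f = (\<Sum>x\<in>K. N x (f x))"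

definition U_ball :: "('x \<Rightarrow> nat) \<Rightarrow> ('x \<Rightarrow> (nat \<Rightarrow> complex) \<Rightarrow> real) \<Rightarrow> 'x set \<Rightarrow> ('x \<Rightarrow> nat \<Rightarrow> complex) set" where
  "U_ball d N K = {f\<in>sections d. seminorm_K N K f \<le> 1}"

definition scale_sec :: "real \<Rightarrow> ('x \<Rightarrow> nat \<Rightarrow> complex) \<Rightarrow> ('x \<Rightarrow> nat \<Rightarrow> complex)" where
  "scale_sec e f = (\<lambda>x i. complex_of_real e * f x i)"

end

theory Submission
  imports Defs "HOL-Library.Function_Algebras"
begin

text \<open>Continuity of \<open>A\<close> and countability of \<open>X\<close>
  make every coordinate of \<open>A f\<close> depend on \<open>f\<close> over finitely many points only, so \<open>A'\<close>
  exists. Since \<open>\<Gamma>(X;F)\<close> is the full algebraic dual of \<open>\<Gamma>\<^sub>c(X;F')\<close>, the range of any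
  operator with a transpose is the annihilator of the kernel of that transpose. Applied to \<open>A\<close>
  restricted to sections vanishing on \<open>K\<close>, this shows that \<open>g\<close> has a preimage whose values on
  \<open>K\<close> are prescribed by the functionals \<open>\<phi>\<close> for which \<open>A' \<phi>\<close> is supported in \<open>K\<close>. As \<open>A'\<close>
  is injective, these form a finite-dimensional space spanned by some \<open>\<phi>\<^sub>1, \<dots>, \<phi>\<^sub>m\<close>, and
  the values on \<open>K\<close> can be chosen as \<open>\<Sum>\<^sub>t (\<phi>\<^sub>t, g) u\<^sub>t\<close> for fixed sections \<open>u\<^sub>t\<close>.
  Equivalence of norms on the finite-dimensional fibres bounds \<open>|(\<phi>\<^sub>t, g)|\<close> by \<open>p\<^sub>K\<^sub>'(g)\<close>,
  where \<open>K'\<close> is \<open>K\<close> together with the supports of the \<open>\<phi>\<^sub>t\<close>; hence \<open>p\<^sub>K(f) \<le> C p\<^sub>K\<^sub>'(g)\<close>.\<close>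

section \<open>Sections, dual sections and their pairing\<close>

type_synonym 'x sec = "'x \<Rightarrow> nat \<Rightarrow> complex"

definition sec_scale :: "complex \<Rightarrow> 'x sec \<Rightarrow> 'x sec" where
  "sec_scale c f = (\<lambda>x i. c * f x i)"

interpretation vs: vector_space "sec_scale :: complex \<Rightarrow> 'x sec \<Rightarrow> 'x sec"
  by unfold_locales (auto simp: sec_scale_def fun_eq_iff algebra_simps)

interpretation vsp: vector_space_pair "sec_scale :: complex \<Rightarrow> 'x sec \<Rightarrow> 'x sec"
    "(*) :: complex \<Rightarrow> complex \<Rightarrow> complex"
  by unfold_locales (auto simp: sec_scale_def fun_eq_iff algebra_simps)

definition delta_sec :: "'x \<Rightarrow> nat \<Rightarrow> 'x sec" where
  "delta_sec x i = (\<lambda>y j. if y = x \<and> j = i then 1 else 0)"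

definition supp_sec :: "'x sec \<Rightarrow> 'x set" where
  "supp_sec phi = {x. phi x \<noteq> (\<lambda>_. 0)}"

lemma sum_fun_apply: "(\<Sum>k\<in>I. F k) x = (\<Sum>k\<in>I. F k x)"
  by (induction I rule: infinite_finite_induct) auto

lemma subspace_sections: "vs.subspace (sections d)"
  by (auto simp: vs.subspace_def sections_def fibre_def sec_scale_def)

lemma subspace_csections_dual: "vs.subspace (csections_dual d)"
  unfolding vs.subspace_def
proof safe
  show "0 \<in> csections_dual d"
    by (simp add: csections_dual_def fibre_def zero_fun_def)
next
  fix f g assume "f \<in> csections_dual d" "g \<in> csections_dual d"
  moreover have "{x. (f + g) x \<noteq> (\<lambda>_. 0)} \<subseteq> {x. f x \<noteq> (\<lambda>_. 0)} \<union> {x. g x \<noteq> (\<lambda>_. 0)}"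
    by auto
  ultimately show "f + g \<in> csections_dual d"
    by (auto simp: csections_dual_def fibre_def intro: finite_subset)
next
  fix c f assume "f \<in> csections_dual d"
  moreover have "{x. sec_scale c f x \<noteq> (\<lambda>_. 0)} \<subseteq> {x. f x \<noteq> (\<lambda>_. 0)}"
    by (auto simp: sec_scale_def)
  ultimately show "sec_scale c f \<in> csections_dual d"
    by (auto simp: csections_dual_def fibre_def sec_scale_def intro: finite_subset)
qed

lemma csections_dual_iff:
  "phi \<in> csections_dual d \<longleftrightarrow> (\<forall>x. phi x \<in> fibre d x) \<and> finite (supp_sec phi)"
  by (simp add: csections_dual_def supp_sec_def)

lemma csections_dual_finite_supp: "phi \<in> csections_dual d \<Longrightarrow> finite (supp_sec phi)"
  by (simp add: csections_dual_def supp_sec_def)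

lemma delta_sec_sections: "i < d x \<Longrightarrow> delta_sec x i \<in> sections d"
  by (auto simp: delta_sec_def sections_def fibre_def)

lemma delta_sec_csections_dual:
  assumes "i < d x"
  shows "delta_sec x i \<in> csections_dual d"
proof -
  have "supp_sec (delta_sec x i) \<subseteq> {x}"
    by (auto simp: supp_sec_def delta_sec_def fun_eq_iff)
  with assms show ?thesis
    by (auto simp: csections_dual_iff delta_sec_def fibre_def intro: finite_subset)
qed

lemma sum_delta_sec:
  assumes "finite S"
  shows "(\<Sum>y\<in>S. \<Sum>j<d y. g y j * delta_sec x i y j) = (if x \<in> S \<and> i < d x then g x i else 0)"
proof -
  have "(\<Sum>y\<in>S. \<Sum>j<d y. g y j * delta_sec x i y j)
      = (\<Sum>y\<in>S. if y = x then (\<Sum>j<d y. g y j * (if j = i then 1 else 0)) else 0)"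
    by (intro sum.cong) (auto simp: delta_sec_def)
  then show ?thesis
    using assms by (simp add: if_distrib[of "times _"] sum.delta' cong: if_cong)
qed

lemma pairing_eq_sum:
  assumes "finite S" "supp_sec phi \<subseteq> S"
  shows "pairing d phi f = (\<Sum>x\<in>S. \<Sum>i<d x. phi x i * f x i)"
  unfolding pairing_def using assms
  by (intro sum.mono_neutral_left) (auto simp: supp_sec_def)

lemma linear_pairing: "Vector_Spaces.linear sec_scale (*) (pairing d phi)"
  by unfold_locales
    (auto simp: pairing_def sec_scale_def algebra_simps sum.distrib sum_distrib_left)

lemma pairing_sum_scale_right:
  "pairing d phi (\<Sum>t\<in>T. sec_scale (c t) (f t)) = (\<Sum>t\<in>T. c t * pairing d phi (f t))"
proof -
  interpret Vector_Spaces.linear sec_scale "(*)" "pairing d phi"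
    by (rule linear_pairing)
  show ?thesis
    by (simp add: sum scale)
qed

lemma pairing_diff_right: "pairing d phi (f - g) = pairing d phi f - pairing d phi g"
proof -
  interpret Vector_Spaces.linear sec_scale "(*)" "pairing d phi"
    by (rule linear_pairing)
  show ?thesis
    by (rule diff)
qed

lemma pairing_zero_left [simp]: "pairing d 0 f = 0"
  by (simp add: pairing_def)

lemma pairing_sum_scale_left:
  assumes "finite T" "\<And>t. t \<in> T \<Longrightarrow> p t \<in> csections_dual d"
  shows "pairing d (\<Sum>t\<in>T. sec_scale (c t) (p t)) f = (\<Sum>t\<in>T. c t * pairing d (p t) f)"
proof -
  let ?S = "\<Union>t\<in>T. supp_sec (p t)"
  have S: "finite ?S" using assms by (auto intro: csections_dual_finite_supp)
  have "supp_sec (\<Sum>t\<in>T. sec_scale (c t) (p t)) \<subseteq> ?S"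
    by (auto simp: supp_sec_def sum_fun_apply sec_scale_def intro: sum.neutral)
  then have "pairing d (\<Sum>t\<in>T. sec_scale (c t) (p t)) f
      = (\<Sum>x\<in>?S. \<Sum>i<d x. (\<Sum>t\<in>T. c t * p t x i) * f x i)"
    using S by (simp add: pairing_eq_sum sum_fun_apply sec_scale_def)
  also have "\<dots> = (\<Sum>t\<in>T. c t * (\<Sum>x\<in>?S. \<Sum>i<d x. p t x i * f x i))"
    by (simp add: sum_distrib_left sum_distrib_right sum.swap[of _ T] mult.assoc)
  also have "\<dots> = (\<Sum>t\<in>T. c t * pairing d (p t) f)"
  proof (intro sum.cong refl arg_cong[where f = "(*) _"])
    fix t assume "t \<in> T"
    then show "(\<Sum>x\<in>?S. \<Sum>i<d x. p t x i * f x i) = pairing d (p t) f"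
      using S by (intro pairing_eq_sum[symmetric]) auto
  qed
  finally show ?thesis .
qed

lemma pairing_delta_sec_left:
  assumes "i < d x"
  shows "pairing d (delta_sec x i) f = f x i"
proof -
  have "supp_sec (delta_sec x i) \<subseteq> {x}"
    by (auto simp: supp_sec_def delta_sec_def fun_eq_iff)
  then have "pairing d (delta_sec x i) f = (\<Sum>y\<in>{x}. \<Sum>j<d y. f y j * delta_sec x i y j)"
    by (subst pairing_eq_sum[of "{x}"]) (simp_all add: mult.commute)
  also have "\<dots> = f x i"
    using assms by (subst sum_delta_sec) auto
  finally show ?thesis .
qed

lemma pairing_delta_sec_right:
  "phi \<in> csections_dual d \<Longrightarrow> i < d x \<Longrightarrow> pairing d phi (delta_sec x i) = phi x i"
  using sum_delta_sec[where S = "insert x (supp_sec phi)" and g = phi]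
  by (subst pairing_eq_sum[of "insert x (supp_sec phi)"]) (auto simp: csections_dual_finite_supp)

lemma delta_expansion:
  assumes "finite S" "\<And>x. f x \<in> fibre d x"
  shows "(\<Sum>x\<in>S. \<Sum>i<d x. sec_scale (f x i) (delta_sec x i))
      = (\<lambda>x. if x \<in> S then f x else (\<lambda>_. 0))"
proof (intro ext)
  fix y j
  have "(\<Sum>x\<in>S. \<Sum>i<d x. sec_scale (f x i) (delta_sec x i)) y j
      = (\<Sum>x\<in>S. \<Sum>i<d x. f x i * delta_sec y j x i)"
    by (auto simp: sum_fun_apply sec_scale_def delta_sec_def intro!: sum.cong)
  also have "\<dots> = (if y \<in> S then f y j else 0)"
    using assms by (auto simp: sum_delta_sec fibre_def not_less)
  finally show "(\<Sum>x\<in>S. \<Sum>i<d x. sec_scale (f x i) (delta_sec x i)) y j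
      = (if y \<in> S then f y else (\<lambda>_. 0)) j"
    by simp
qed

lemma sections_eqI:
  assumes "f \<in> sections d" "g \<in> sections d"
    and "\<And>phi. phi \<in> csections_dual d \<Longrightarrow> pairing d phi f = pairing d phi g"
  shows "f = g"
proof (intro ext)
  fix x i
  show "f x i = g x i"
  proof (cases "i < d x")
    case True
    then show ?thesis
      using assms(3)[OF delta_sec_csections_dual] by (simp add: pairing_delta_sec_left)
  qed (use assms in \<open>auto simp: sections_def fibre_def\<close>)
qed

lemma csections_dual_eqI:
  assumes "phi \<in> csections_dual d" "psi \<in> csections_dual d"
    and "\<And>f. f \<in> sections d \<Longrightarrow> pairing d phi f = pairing d psi f"
  shows "phi = psi"
proof (intro ext)
  fix x i
  show "phi x i = psi x i"
  proof (cases "i < d x")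
    case True
    then show ?thesis
      using assms delta_sec_sections pairing_delta_sec_right by metis
  qed (use assms in \<open>auto simp: csections_dual_def fibre_def\<close>)
qed

lemma pairing_diff_left:
  assumes "phi \<in> csections_dual d" "psi \<in> csections_dual d"
  shows "pairing d (phi - psi) f = pairing d phi f - pairing d psi f"
proof -
  let ?S = "supp_sec phi \<union> supp_sec psi"
  have "finite ?S"
    using assms by (simp add: csections_dual_finite_supp)
  moreover have "supp_sec (phi - psi) \<subseteq> ?S"
    by (auto simp: supp_sec_def)
  ultimately show ?thesis
    by (simp add: pairing_eq_sum[of ?S] sum_subtractf algebra_simps)
qed

lemma functional_eq_pairing_section:
  assumes "Vector_Spaces.linear sec_scale (*) L"
  obtains u where "u \<in> sections d" "\<And>psi. psi \<in> csections_dual d \<Longrightarrow> pairing d psi u = L psi"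
proof -
  interpret L: Vector_Spaces.linear sec_scale "(*)" L by fact
  define u where "u = (\<lambda>x i. if i < d x then L (delta_sec x i) else 0)"
  have "pairing d psi u = L psi" if psi: "psi \<in> csections_dual d" for psi
  proof -
    let ?S = "supp_sec psi"
    have S: "finite ?S"
      using psi by (rule csections_dual_finite_supp)
    have "pairing d psi u = (\<Sum>x\<in>?S. \<Sum>i<d x. psi x i * L (delta_sec x i))"
      using S by (simp add: pairing_eq_sum u_def)
    also have "\<dots> = L (\<Sum>x\<in>?S. \<Sum>i<d x. sec_scale (psi x i) (delta_sec x i))"
      by (simp add: L.sum L.scale)
    also have "(\<Sum>x\<in>?S. \<Sum>i<d x. sec_scale (psi x i) (delta_sec x i)) = psi"
      using delta_expansion[OF S, of psi d] psi
      by (auto simp: csections_dual_def supp_sec_def fun_eq_iff)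
    finally show ?thesis .
  qed
  moreover have "u \<in> sections d"
    by (auto simp: u_def sections_def fibre_def)
  ultimately show thesis
    using that by blast
qed

lemma biorthogonal_sections:
  assumes "vs.independent T" "T \<subseteq> csections_dual d"
  obtains u where "\<And>t. u t \<in> sections d"
    "\<And>t t'. t' \<in> T \<Longrightarrow> pairing d t' (u t) = (if t' = t then 1 else 0)"
proof -
  have "\<exists>v\<in>sections d. \<forall>t'\<in>T. pairing d t' v = (if t' = t then 1 else 0)" for t
  proof -
    obtain L where L: "Vector_Spaces.linear sec_scale (*) L" "\<forall>t'\<in>T. L t' = (if t' = t then 1 else 0)"
      using vsp.linear_independent_extend[OF assms(1), of "\<lambda>t'. if t' = t then 1 else 0"] by blast
    obtain v where v: "v \<in> sections d" "\<And>psi. psi \<in> csections_dual d \<Longrightarrow> pairing d psi v = L psi"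
      using functional_eq_pairing_section[OF L(1)] by blast
    have "pairing d t' v = (if t' = t then 1 else 0)" if "t' \<in> T" for t'
      using that assms(2) L(2) v(2) by auto
    with v(1) show ?thesis
      by blast
  qed
  then have "\<forall>t. \<exists>v. v \<in> sections d \<and> (\<forall>t'\<in>T. pairing d t' v = (if t' = t then 1 else 0))"
    by blast
  from choice[OF this] obtain u
    where "\<forall>t. u t \<in> sections d \<and> (\<forall>t'\<in>T. pairing d t' (u t) = (if t' = t then 1 else 0))"
    by blast
  then show thesis
    using that by blast
qed

section \<open>Operators with a transpose\<close>

text \<open>Linearity of \<open>Bt\<close> is not assumed: it follows from the adjoint identity, as the pairing
  separates dual sections.\<close>

locale adjoint_pair =
  fixes d :: "'x \<Rightarrow> nat" and B Bt :: "'x sec \<Rightarrow> 'x sec"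
  assumes B_sections: "\<And>f. f \<in> sections d \<Longrightarrow> B f \<in> sections d"
    and Bt_csections_dual: "\<And>phi. phi \<in> csections_dual d \<Longrightarrow> Bt phi \<in> csections_dual d"
    and pairing_Bt:
      "\<And>phi f. phi \<in> csections_dual d \<Longrightarrow> f \<in> sections d \<Longrightarrow> pairing d (Bt phi) f = pairing d phi (B f)"
begin

lemma Bt_sum_scale:
  assumes "finite S" "\<And>s. s \<in> S \<Longrightarrow> p s \<in> csections_dual d"
  shows "Bt (\<Sum>s\<in>S. sec_scale (c s) (p s)) = (\<Sum>s\<in>S. sec_scale (c s) (Bt (p s)))"
proof (rule csections_dual_eqI)
  have closed: "(\<Sum>s\<in>S. sec_scale (c s) (q s)) \<in> csections_dual d"
    if "\<And>s. s \<in> S \<Longrightarrow> q s \<in> csections_dual d" for q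
    using that by (intro vs.subspace_sum[OF subspace_csections_dual]
        vs.subspace_scale[OF subspace_csections_dual])
  show "Bt (\<Sum>s\<in>S. sec_scale (c s) (p s)) \<in> csections_dual d"
    using assms(2) by (intro Bt_csections_dual closed)
  show "(\<Sum>s\<in>S. sec_scale (c s) (Bt (p s))) \<in> csections_dual d"
    using assms(2) by (intro closed Bt_csections_dual)
  fix f assume f: "f \<in> sections d"
  then show "pairing d (Bt (\<Sum>s\<in>S. sec_scale (c s) (p s))) f
      = pairing d (\<Sum>s\<in>S. sec_scale (c s) (Bt (p s))) f"
    using assms closed[of p] B_sections
    by (simp add: pairing_Bt pairing_sum_scale_left pairing_sum_scale_right Bt_csections_dual)
qed

lemma Bt_diff:
  assumes "phi \<in> csections_dual d" "psi \<in> csections_dual d"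
  shows "Bt (phi - psi) = Bt phi - Bt psi"
proof (rule csections_dual_eqI)
  have diff: "phi - psi \<in> csections_dual d"
    using assms by (rule vs.subspace_diff[OF subspace_csections_dual])
  then show "Bt (phi - psi) \<in> csections_dual d"
    by (rule Bt_csections_dual)
  show "Bt phi - Bt psi \<in> csections_dual d"
    using assms by (intro vs.subspace_diff[OF subspace_csections_dual] Bt_csections_dual)
  fix f assume "f \<in> sections d"
  then show "pairing d (Bt (phi - psi)) f = pairing d (Bt phi - Bt psi) f"
    using assms diff B_sections
    by (simp add: pairing_Bt pairing_diff_left pairing_diff_right Bt_csections_dual)
qed

lemma Bt_zero: "Bt 0 = 0"
proof -
  have "0 \<in> csections_dual d"
    by (rule subspace_csections_dual[THEN vs.subspace_0])
  then show ?thesis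
    using Bt_diff by fastforce
qed

lemma pairing_eq_via_preimages:
  assumes g: "\<And>psi. psi \<in> csections_dual d \<Longrightarrow> Bt psi = 0 \<Longrightarrow> pairing d psi g = 0"
    and S: "finite S" "\<And>b. b \<in> S \<Longrightarrow> p b \<in> csections_dual d \<and> Bt (p b) = b"
    and phi: "phi \<in> csections_dual d" "Bt phi = (\<Sum>b\<in>S. sec_scale (c b) b)"
  shows "pairing d phi g = (\<Sum>b\<in>S. c b * pairing d (p b) g)"
proof -
  define q where "q = (\<Sum>b\<in>S. sec_scale (c b) (p b))"
  have q: "q \<in> csections_dual d"
    unfolding q_def using S(2)
    by (intro vs.subspace_sum[OF subspace_csections_dual] vs.subspace_scale[OF subspace_csections_dual]) auto
  have "Bt q = Bt phi"
    using S phi by (simp add: q_def Bt_sum_scale)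
  then have "Bt (phi - q) = 0"
    using phi q by (simp add: Bt_diff)
  then have "pairing d (phi - q) g = 0"
    using g phi q vs.subspace_diff[OF subspace_csections_dual] by blast
  then have "pairing d phi g = pairing d q g"
    using phi q by (simp add: pairing_diff_left)
  also have "\<dots> = (\<Sum>b\<in>S. c b * pairing d (p b) g)"
    using S by (simp add: q_def pairing_sum_scale_left)
  finally show ?thesis .
qed

text \<open>The functional \<open>Bt \<phi> \<mapsto> (\<phi>, g)\<close> is well defined on the range of \<open>Bt\<close> because \<open>g\<close>
  annihilates the kernel; extended linearly to all dual sections, it is represented by a section
  \<open>u\<close>, and then \<open>B u = g\<close>.\<close>

lemma exists_preimage_if_annihilates_kernel:
  assumes g: "g \<in> sections d" "\<And>phi. phi \<in> csections_dual d \<Longrightarrow> Bt phi = 0 \<Longrightarrow> pairing d phi g = 0"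
  obtains f where "f \<in> sections d" "B f = g"
proof -
  obtain \<beta> where \<beta>: "\<beta> \<subseteq> Bt ` csections_dual d" "vs.independent \<beta>" "Bt ` csections_dual d \<subseteq> vs.span \<beta>"
    by (rule vs.basis_exists)
  have "\<forall>b\<in>\<beta>. \<exists>phi. phi \<in> csections_dual d \<and> Bt phi = b"
    using \<beta>(1) by blast
  then obtain p where p: "\<And>b. b \<in> \<beta> \<Longrightarrow> p b \<in> csections_dual d \<and> Bt (p b) = b"
    by (auto dest!: bchoice)
  obtain L where L: "Vector_Spaces.linear sec_scale (*) L" "\<And>b. b \<in> \<beta> \<Longrightarrow> L b = pairing d (p b) g"
    using vsp.linear_independent_extend[OF \<beta>(2), of "\<lambda>b. pairing d (p b) g"] by blast
  interpret L: Vector_Spaces.linear sec_scale "(*)" L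
    by (fact L(1))
  have L_Bt: "L (Bt phi) = pairing d phi g" if phi: "phi \<in> csections_dual d" for phi
  proof -
    obtain S c where S: "finite S" "S \<subseteq> \<beta>" "Bt phi = (\<Sum>b\<in>S. sec_scale (c b) b)"
      using \<beta>(3) phi unfolding vs.span_explicit by blast
    then have "L (Bt phi) = (\<Sum>b\<in>S. c b * pairing d (p b) g)"
      using L(2) by (auto simp: L.sum L.scale intro!: sum.cong)
    also have "\<dots> = pairing d phi g"
      using S p phi g(2) by (intro pairing_eq_via_preimages[symmetric]) auto
    finally show ?thesis .
  qed
  obtain u where u: "u \<in> sections d" "\<And>psi. psi \<in> csections_dual d \<Longrightarrow> pairing d psi u = L psi"
    using functional_eq_pairing_section[OF L(1)] by blast
  have "B u = g"
  proof (rule sections_eqI[OF B_sections[OF u(1)] g(1)])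
    fix phi assume "phi \<in> csections_dual d"
    then show "pairing d phi (B u) = pairing d phi g"
      by (simp add: pairing_Bt[symmetric] u Bt_csections_dual L_Bt)
  qed
  then show thesis
    using that u(1) by blast
qed

lemma Bt_eq_zero_imp_eq_zero:
  assumes "inj_on Bt (csections_dual d)" "psi \<in> csections_dual d" "Bt psi = 0"
  shows "psi = 0"
  using assms Bt_zero subspace_csections_dual[THEN vs.subspace_0] unfolding inj_on_def by metis

lemma finite_rank_solution_on_span:
  assumes inj: "inj_on Bt (csections_dual d)"
    and T: "finite T" "vs.independent T" "T \<subseteq> Bt ` csections_dual d"
  obtains p u where "\<And>t. t \<in> T \<Longrightarrow> p t \<in> csections_dual d" "\<And>t. u t \<in> sections d"
    "\<And>phi g. phi \<in> csections_dual d \<Longrightarrow> Bt phi \<in> vs.span T \<Longrightarrow>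
      pairing d (Bt phi) (\<Sum>t\<in>T. sec_scale (pairing d (p t) g) (u t)) = pairing d phi g"
proof -
  have "\<forall>t\<in>T. \<exists>phi. phi \<in> csections_dual d \<and> Bt phi = t"
    using T(3) by blast
  then have "\<exists>p. \<forall>t\<in>T. p t \<in> csections_dual d \<and> Bt (p t) = t"
    by (rule bchoice)
  then obtain p where p: "\<forall>t\<in>T. p t \<in> csections_dual d \<and> Bt (p t) = t"
    by blast
  have T_dual: "T \<subseteq> csections_dual d"
    using T(3) Bt_csections_dual by blast
  obtain u where u: "\<And>t. u t \<in> sections d"
    "\<And>t t'. t' \<in> T \<Longrightarrow> pairing d t' (u t) = (if t' = t then 1 else 0)"
    using biorthogonal_sections[OF T(2) T_dual] by blast
  have "pairing d (Bt phi) (\<Sum>t\<in>T. sec_scale (pairing d (p t) g) (u t)) = pairing d phi g"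
    if phi: "phi \<in> csections_dual d" "Bt phi \<in> vs.span T" for phi g
  proof -
    obtain c where c: "Bt phi = (\<Sum>t\<in>T. sec_scale (c t) t)"
      using phi(2) vs.span_finite[OF T(1)] by blast
    have "pairing d t (\<Sum>s\<in>T. sec_scale (pairing d (p s) g) (u s)) = pairing d (p t) g"
      if "t \<in> T" for t
      using that T(1) by (simp add: pairing_sum_scale_right u(2) if_distrib[of "times _"] sum.delta
          cong: if_cong)
    then have "pairing d (Bt phi) (\<Sum>t\<in>T. sec_scale (pairing d (p t) g) (u t))
        = (\<Sum>t\<in>T. c t * pairing d (p t) g)"
      using T(1) T_dual by (simp add: c pairing_sum_scale_left subset_iff)
    also have "\<dots> = pairing d phi g"
      using phi(1) T(1) p c
      by (intro pairing_eq_via_preimages[symmetric]) (auto dest: Bt_eq_zero_imp_eq_zero[OF inj])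
    finally show ?thesis .
  qed
  with p u show thesis
    using that by blast
qed

end

section \<open>Continuous operators on sections\<close>

definition zero_on :: "'x set \<Rightarrow> 'x sec \<Rightarrow> 'x sec" where
  "zero_on K f = (\<lambda>x. if x \<in> K then (\<lambda>_. 0) else f x)"

lemma zero_on_sections: "f \<in> sections d \<Longrightarrow> zero_on K f \<in> sections d"
  by (auto simp: zero_on_def sections_def fibre_def)

lemma zero_on_csections_dual:
  assumes "phi \<in> csections_dual d"
  shows "zero_on K phi \<in> csections_dual d"
proof -
  have "supp_sec (zero_on K phi) \<subseteq> supp_sec phi"
    by (auto simp: supp_sec_def zero_on_def)
  then have "finite (supp_sec (zero_on K phi))"
    using csections_dual_finite_supp[OF assms] by (rule finite_subset)
  moreover have "zero_on K phi x \<in> fibre d x" for x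
    using assms by (auto simp: csections_dual_iff zero_on_def fibre_def)
  ultimately show ?thesis
    by (simp add: csections_dual_iff)
qed

lemma pairing_zero_on:
  assumes "phi \<in> csections_dual d"
  shows "pairing d (zero_on K phi) f = pairing d phi (zero_on K f)"
proof -
  have S: "finite (supp_sec phi)"
    using assms by (rule csections_dual_finite_supp)
  have "supp_sec (zero_on K phi) \<subseteq> supp_sec phi"
    by (auto simp: supp_sec_def zero_on_def)
  then show ?thesis
    using S by (auto simp: pairing_eq_sum[OF S] zero_on_def intro!: sum.cong)
qed

lemma tendsto_fun_iff:
  fixes f :: "'a \<Rightarrow> 'i \<Rightarrow> 'b::topological_space"
  shows "(f \<longlongrightarrow> l) F \<longleftrightarrow> (\<forall>i. ((\<lambda>c. f c i) \<longlongrightarrow> l i) F)"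
proof -
  have "(f \<longlongrightarrow> l) F \<longleftrightarrow> limitin (product_topology (\<lambda>i. euclidean) UNIV) f l F"
    by (simp add: euclidean_product_topology)
  also have "\<dots> \<longleftrightarrow> (\<forall>i. ((\<lambda>c. f c i) \<longlongrightarrow> l i) F)"
    by (simp add: limitin_componentwise)
  finally show ?thesis .
qed

lemma finite_basis_of_supported:
  assumes "finite K" "W \<subseteq> csections_dual d" "\<And>t x. t \<in> W \<Longrightarrow> x \<notin> K \<Longrightarrow> t x = (\<lambda>_. 0)"
  obtains T where "T \<subseteq> W" "finite T" "vs.independent T" "W \<subseteq> vs.span T"
proof -
  obtain T where T: "T \<subseteq> W" "vs.independent T" "W \<subseteq> vs.span T"
    by (rule vs.basis_exists)
  define \<Delta> where "\<Delta> = (\<lambda>(x, i). delta_sec x i) ` (SIGMA x:K. {..<d x})"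
  have "W \<subseteq> vs.span \<Delta>"
  proof
    fix t assume t: "t \<in> W"
    have "t = (\<Sum>x\<in>K. \<Sum>i<d x. sec_scale (t x i) (delta_sec x i))"
      using delta_expansion[OF assms(1), of t d] t assms(2,3) by (auto simp: csections_dual_iff fun_eq_iff)
    also have "\<dots> \<in> vs.span \<Delta>"
      by (intro vs.span_sum vs.span_scale vs.span_base) (auto simp: \<Delta>_def)
    finally show "t \<in> vs.span \<Delta>" .
  qed
  moreover have "finite \<Delta>"
    using assms(1) by (simp add: \<Delta>_def)
  ultimately have "finite T"
    using vs.independent_span_bound[of \<Delta> T] T by auto
  with T show thesis
    using that by blast
qed

locale continuous_section_operator =
  fixes d :: "'x::countable \<Rightarrow> nat" and A :: "'x sec \<Rightarrow> 'x sec"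
  assumes A_sections: "A ` sections d \<subseteq> sections d"
    and linear_A: "linear_on_sections d A"
    and continuous_A: "continuous_on (sections d) A"
begin

lemma A_add: "f \<in> sections d \<Longrightarrow> g \<in> sections d \<Longrightarrow> A (f + g) = A f + A g"
  using linear_A unfolding linear_on_sections_def plus_fun_def by simp

lemma A_scale: "f \<in> sections d \<Longrightarrow> A (sec_scale c f) = sec_scale c (A f)"
  using linear_A unfolding linear_on_sections_def sec_scale_def by simp

lemma A_zero: "A 0 = 0"
proof -
  have "A (sec_scale 0 0) = sec_scale 0 (A 0)"
    using subspace_sections[THEN vs.subspace_0] by (rule A_scale)
  then show ?thesis
    by simp
qed

lemma A_sum:
  assumes "\<And>s. s \<in> S \<Longrightarrow> F s \<in> sections d"
  shows "A (\<Sum>s\<in>S. F s) = (\<Sum>s\<in>S. A (F s))"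
  using assms
proof (induction S rule: infinite_finite_induct)
  case (insert s S)
  have IH: "A (sum F S) = (\<Sum>s\<in>S. A (F s))"
    using insert.IH insert.prems by blast
  have "A (sum F (insert s S)) = A (F s + sum F S)"
    using insert(1,2) by (subst sum.insert) auto
  also have "\<dots> = A (F s) + A (sum F S)"
    using insert.prems by (intro A_add vs.subspace_sum[OF subspace_sections]) auto
  also have "\<dots> = (\<Sum>s\<in>insert s S. A (F s))"
    using insert(1,2) IH by (subst sum.insert) auto
  finally show ?case .
qed (simp_all add: A_zero)

text \<open>Countability of \<open>X\<close> enters here: a section vanishing on the first \<open>n\<close> points of an
  enumeration of \<open>X\<close> tends to zero as \<open>n \<rightarrow> \<infinity>\<close>.\<close>

lemma coordinate_finite_dependence:
  "\<exists>S. finite S \<and> (\<forall>f\<in>sections d. (\<forall>x\<in>S. f x = (\<lambda>_. 0)) \<longrightarrow> A f y j = 0)"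
proof (rule ccontr)
  assume no_finite: "\<not> ?thesis"
  have "\<exists>f. f \<in> sections d \<and> (\<forall>x. to_nat x < n \<longrightarrow> f x = (\<lambda>_. 0)) \<and> A f y j \<noteq> 0" for n
  proof -
    have "finite {x::'x. to_nat x < n}"
      using finite_vimageI[of "{..<n}" "to_nat :: 'x \<Rightarrow> nat"] by (simp add: vimage_def)
    then show ?thesis
      using no_finite by blast
  qed
  then obtain F where F: "\<And>n. F n \<in> sections d" "\<And>n x. to_nat x < n \<Longrightarrow> F n x = (\<lambda>_. 0)"
    "\<And>n. A (F n) y j \<noteq> 0"
    by metis
  define h where "h n = sec_scale (1 / A (F n) y j) (F n)" for n
  have h_sections: "h n \<in> sections d" for n
    using F(1) by (simp add: h_def vs.subspace_scale[OF subspace_sections])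
  have "A (h n) y j = 1" for n
  proof -
    have "A (h n) = sec_scale (1 / A (F n) y j) (A (F n))"
      unfolding h_def by (rule A_scale[OF F(1)])
    then show ?thesis
      using F(3)[of n] by (simp add: sec_scale_def)
  qed
  moreover have "h \<longlonglongrightarrow> 0"
    unfolding tendsto_fun_iff
  proof (intro allI)
    fix x i
    have "eventually (\<lambda>n. h n x i = 0) sequentially"
      unfolding eventually_sequentially
      by (rule exI[of _ "Suc (to_nat x)"]) (auto simp: h_def sec_scale_def F(2))
    then show "(\<lambda>n. h n x i) \<longlonglongrightarrow> (0::'x sec) x i"
      by (simp add: tendsto_eventually)
  qed
  then have "(\<lambda>n. A (h n)) \<longlonglongrightarrow> A 0"
    using continuous_A h_sections subspace_sections[THEN vs.subspace_0]
    unfolding continuous_on_sequentially comp_def by blast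
  then have "(\<lambda>n. A (h n) y j) \<longlonglongrightarrow> 0"
    by (simp add: A_zero tendsto_fun_iff)
  ultimately show False
    by (simp add: LIMSEQ_const_iff)
qed

lemma pairing_A_finite_dependence:
  assumes "phi \<in> csections_dual d"
  obtains S where "finite S"
    "\<And>f. f \<in> sections d \<Longrightarrow> \<forall>x\<in>S. f x = (\<lambda>_. 0) \<Longrightarrow> pairing d phi (A f) = 0"
proof -
  define SF where
    "SF y j = (SOME S. finite S \<and> (\<forall>f\<in>sections d. (\<forall>x\<in>S. f x = (\<lambda>_. 0)) \<longrightarrow> A f y j = 0))"
    for y j
  have SF: "finite (SF y j) \<and> (\<forall>f\<in>sections d. (\<forall>x\<in>SF y j. f x = (\<lambda>_. 0)) \<longrightarrow> A f y j = 0)"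
    for y j
    unfolding SF_def by (rule someI_ex[OF coordinate_finite_dependence])
  let ?P = "supp_sec phi"
  have P: "finite ?P"
    using assms by (rule csections_dual_finite_supp)
  show thesis
  proof (rule that)
    show "finite (\<Union>y\<in>?P. \<Union>j<d y. SF y j)"
      using P SF by (intro finite_UN_I) auto
    fix f assume f: "f \<in> sections d" "\<forall>x\<in>(\<Union>y\<in>?P. \<Union>j<d y. SF y j). f x = (\<lambda>_. 0)"
    have "A f y j = 0" if "y \<in> ?P" "j < d y" for y j
    proof -
      have "\<forall>x\<in>SF y j. f x = (\<lambda>_. 0)"
        using f(2) that by blast
      then show ?thesis
        using SF[of y j] f(1) by blast
    qed
    then show "pairing d phi (A f) = 0"
      by (auto simp: pairing_eq_sum[OF P] intro!: sum.neutral)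
  qed
qed

lemma dual_op_exists:
  assumes phi: "phi \<in> csections_dual d"
  shows "\<exists>psi\<in>csections_dual d. \<forall>f\<in>sections d. pairing d psi f = pairing d phi (A f)"
proof -
  interpret P: Vector_Spaces.linear sec_scale "(*)" "pairing d phi"
    by (rule linear_pairing)
  obtain S where S: "finite S"
    "\<And>f. f \<in> sections d \<Longrightarrow> \<forall>x\<in>S. f x = (\<lambda>_. 0) \<Longrightarrow> pairing d phi (A f) = 0"
    using pairing_A_finite_dependence[OF phi] by blast
  define psi where "psi x i = (if x \<in> S \<and> i < d x then pairing d phi (A (delta_sec x i)) else 0)"
    for x i \<comment> \<open>\<open>(A' \<phi>)(x)(i) = (\<phi>, A \<delta>\<^sub>x\<^sub>,\<^sub>i)\<close>, which vanishes for \<open>x \<notin> S\<close>\<close>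
  have "supp_sec psi \<subseteq> S"
    by (auto simp: supp_sec_def psi_def fun_eq_iff)
  then have psi_sum: "pairing d psi f = (\<Sum>x\<in>S. \<Sum>i<d x. psi x i * f x i)" for f
    by (rule pairing_eq_sum[OF S(1)])
  have "finite (supp_sec psi)"
    using \<open>supp_sec psi \<subseteq> S\<close> S(1) by (rule finite_subset)
  moreover have "psi x \<in> fibre d x" for x
    by (simp add: fibre_def psi_def)
  ultimately have "psi \<in> csections_dual d"
    by (simp add: csections_dual_iff)
  moreover have "pairing d psi f = pairing d phi (A f)" if f: "f \<in> sections d" for f
  proof -
    define fS where "fS = (\<Sum>x\<in>S. \<Sum>i<d x. sec_scale (f x i) (delta_sec x i))"
    have fS_sections: "fS \<in> sections d"
      unfolding fS_def
      by (intro vs.subspace_sum[OF subspace_sections] vs.subspace_scale[OF subspace_sections]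
          delta_sec_sections) auto
    have "fS = (\<lambda>x. if x \<in> S then f x else (\<lambda>_. 0))"
      unfolding fS_def using f by (intro delta_expansion[OF S(1)]) (auto simp: sections_def)
    then have "pairing d phi (A (f - fS)) = 0"
      using f fS_sections by (intro S(2) vs.subspace_diff[OF subspace_sections]) auto
    moreover have "A f = A (f - fS) + A fS"
      using A_add[OF vs.subspace_diff[OF subspace_sections f fS_sections] fS_sections] by simp
    ultimately have "pairing d phi (A f) = pairing d phi (A fS)"
      by (simp add: P.add)
    also have "A fS = (\<Sum>x\<in>S. \<Sum>i<d x. sec_scale (f x i) (A (delta_sec x i)))"
    proof -
      have scaled: "sec_scale (f x i) (delta_sec x i) \<in> sections d" if "i < d x" for x i
        using that by (intro vs.subspace_scale[OF subspace_sections] delta_sec_sections)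
      have "A fS = (\<Sum>x\<in>S. A (\<Sum>i<d x. sec_scale (f x i) (delta_sec x i)))"
        unfolding fS_def using scaled by (intro A_sum vs.subspace_sum[OF subspace_sections]) auto
      also have "\<dots> = (\<Sum>x\<in>S. \<Sum>i<d x. A (sec_scale (f x i) (delta_sec x i)))"
        using scaled by (intro sum.cong refl A_sum) auto
      finally show ?thesis
        by (simp add: A_scale delta_sec_sections)
    qed
    also have "pairing d phi \<dots> = (\<Sum>x\<in>S. \<Sum>i<d x. psi x i * f x i)"
      by (auto simp: P.sum P.scale psi_def intro!: sum.cong)
    finally show ?thesis
      by (simp add: psi_sum)
  qed
  ultimately show ?thesis
    by blast
qed

lemma dual_op:
  assumes "phi \<in> csections_dual d"
  shows dual_op_csections_dual: "dual_op d A phi \<in> csections_dual d"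
    and pairing_dual_op: "\<And>f. f \<in> sections d \<Longrightarrow> pairing d (dual_op d A phi) f = pairing d phi (A f)"
proof -
  obtain psi where psi: "psi \<in> csections_dual d" "\<forall>f\<in>sections d. pairing d psi f = pairing d phi (A f)"
    using dual_op_exists[OF assms] by blast
  have "dual_op d A phi \<in> csections_dual d \<and>
      (\<forall>f\<in>sections d. pairing d (dual_op d A phi) f = pairing d phi (A f))"
    unfolding dual_op_def by (rule theI[of _ psi]) (use psi in \<open>auto intro: csections_dual_eqI\<close>)
  then show "dual_op d A phi \<in> csections_dual d"
    "\<And>f. f \<in> sections d \<Longrightarrow> pairing d (dual_op d A phi) f = pairing d phi (A f)"
    by blast+
qed

sublocale adjoint_pair d A "dual_op d A"
  using A_sections by unfold_locales (auto intro: dual_op_csections_dual pairing_dual_op)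

lemma exists_preimage_vanishing_on:
  assumes "g \<in> sections d"
    and "\<And>phi. phi \<in> csections_dual d \<Longrightarrow> \<forall>x. x \<notin> K \<longrightarrow> dual_op d A phi x = (\<lambda>_. 0) \<Longrightarrow>
      pairing d phi g = 0"
  obtains z where "z \<in> sections d" "\<forall>x\<in>K. z x = (\<lambda>_. 0)" "A z = g"
proof -
  interpret Z: adjoint_pair d "\<lambda>f. A (zero_on K f)" "\<lambda>phi. zero_on K (dual_op d A phi)"
  proof
    show "A (zero_on K f) \<in> sections d" if "f \<in> sections d" for f
      using that A_sections zero_on_sections by blast
    show "zero_on K (dual_op d A phi) \<in> csections_dual d" if "phi \<in> csections_dual d" for phi
      using that by (intro zero_on_csections_dual dual_op_csections_dual)
    show "pairing d (zero_on K (dual_op d A phi)) f = pairing d phi (A (zero_on K f))"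
      if "phi \<in> csections_dual d" "f \<in> sections d" for phi f
      using that by (simp add: pairing_zero_on dual_op_csections_dual pairing_dual_op zero_on_sections)
  qed
  have "pairing d phi g = 0"
    if "phi \<in> csections_dual d" "zero_on K (dual_op d A phi) = 0" for phi
  proof (rule assms(2)[OF that(1)], intro allI impI)
    fix x assume "x \<notin> K"
    then show "dual_op d A phi x = (\<lambda>_. 0)"
      using fun_cong[OF that(2), of x] by (simp add: zero_on_def zero_fun_def)
  qed
  then obtain f where "f \<in> sections d" "A (zero_on K f) = g"
    using Z.exists_preimage_if_annihilates_kernel[OF assms(1)] by blast
  moreover have "\<forall>x\<in>K. zero_on K f x = (\<lambda>_. 0)"
    by (simp add: zero_on_def)
  ultimately show thesis
    using that zero_on_sections by blast
qed

lemma finite_rank_preimage: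
  assumes inj: "inj_on (dual_op d A) (csections_dual d)" and K: "finite K"
  obtains T :: "'x sec set" and p u where "finite T" "\<And>t. t \<in> T \<Longrightarrow> p t \<in> csections_dual d"
    "\<And>t. u t \<in> sections d"
    "\<And>g. g \<in> sections d \<Longrightarrow>
      \<exists>f\<in>sections d. A f = g \<and> (\<forall>x\<in>K. \<forall>i. f x i = (\<Sum>t\<in>T. pairing d (p t) g * u t x i))"
proof -
  \<comment> \<open>\<open>Phi\<close> is the kernel of the transpose of \<open>f \<mapsto> A (zero_on K f)\<close>\<close>
  define Phi where "Phi = {phi \<in> csections_dual d. \<forall>x. x \<notin> K \<longrightarrow> dual_op d A phi x = (\<lambda>_. 0)}"
  have Phi_dual: "dual_op d A ` Phi \<subseteq> csections_dual d"
    by (auto simp: Phi_def dual_op_csections_dual)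
  have Phi_supp: "t x = (\<lambda>_. 0)" if "t \<in> dual_op d A ` Phi" "x \<notin> K" for t x
    using that by (auto simp: Phi_def)
  obtain T where T: "T \<subseteq> dual_op d A ` Phi" "finite T" "vs.independent T"
    "dual_op d A ` Phi \<subseteq> vs.span T"
    by (rule finite_basis_of_supported[OF K Phi_dual]) (auto intro: Phi_supp)
  moreover have "T \<subseteq> dual_op d A ` csections_dual d"
    using T(1) by (auto simp: Phi_def)
  ultimately obtain p u where p: "\<And>t. t \<in> T \<Longrightarrow> p t \<in> csections_dual d"
    and u: "\<And>t. u t \<in> sections d"
    and R: "\<And>phi g. phi \<in> csections_dual d \<Longrightarrow> dual_op d A phi \<in> vs.span T \<Longrightarrow>
      pairing d (dual_op d A phi) (\<Sum>t\<in>T. sec_scale (pairing d (p t) g) (u t)) = pairing d phi g"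
    using finite_rank_solution_on_span[OF inj] by blast
  define R where "R g = (\<Sum>t\<in>T. sec_scale (pairing d (p t) g) (u t))" for g
  have R_sections: "R g \<in> sections d" for g
    unfolding R_def
    by (intro vs.subspace_sum[OF subspace_sections] vs.subspace_scale[OF subspace_sections] u)
  show thesis
  proof (rule that[of T p u])
    show "finite T"
      by (fact T(2))
    show "p t \<in> csections_dual d" if "t \<in> T" for t
      using that by (rule p)
    show "u t \<in> sections d" for t
      by (fact u)
    fix g assume g: "g \<in> sections d"
    have rest: "g - A (R g) \<in> sections d"
      using g R_sections A_sections by (blast intro: vs.subspace_diff[OF subspace_sections])
    have "pairing d phi (g - A (R g)) = 0"
      if "phi \<in> csections_dual d" "\<forall>x. x \<notin> K \<longrightarrow> dual_op d A phi x = (\<lambda>_. 0)" for phi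
    proof -
      have "dual_op d A phi \<in> vs.span T"
        using that T(4) by (auto simp: Phi_def)
      then show ?thesis
        using that(1) R R_sections by (simp add: R_def pairing_diff_right pairing_Bt[symmetric])
    qed
    then obtain z where z: "z \<in> sections d" "\<forall>x\<in>K. z x = (\<lambda>_. 0)" "A z = g - A (R g)"
      using exists_preimage_vanishing_on[OF rest] by blast
    show "\<exists>f\<in>sections d. A f = g \<and> (\<forall>x\<in>K. \<forall>i. f x i = (\<Sum>t\<in>T. pairing d (p t) g * u t x i))"
    proof (intro bexI conjI)
      show "A (R g + z) = g"
        using A_add[OF R_sections z(1)] z(3) by simp
      show "\<forall>x\<in>K. \<forall>i. (R g + z) x i = (\<Sum>t\<in>T. pairing d (p t) g * u t x i)"
        using z(2) by (simp add: R_def sum_fun_apply sec_scale_def)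
      show "R g + z \<in> sections d"
        using R_sections z(1) by (rule vs.subspace_add[OF subspace_sections])
    qed
  qed
qed

end

section \<open>Norms on the fibres\<close>

lemma is_norm_onD:
  assumes "is_norm_on V N"
  shows norm_on_nonneg: "v \<in> V \<Longrightarrow> 0 \<le> N v"
    and norm_on_eq_zero_iff: "v \<in> V \<Longrightarrow> N v = 0 \<longleftrightarrow> v = (\<lambda>_. 0)"
    and norm_on_scale: "v \<in> V \<Longrightarrow> N (\<lambda>i. c * v i) = cmod c * N v"
    and norm_on_triangle: "v \<in> V \<Longrightarrow> w \<in> V \<Longrightarrow> N (\<lambda>i. v i + w i) \<le> N v + N w"
  using assms unfolding is_norm_on_def by blast+

lemma fibre_scale: "v \<in> fibre d x \<Longrightarrow> (\<lambda>i. c * v i) \<in> fibre d x"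
  by (simp add: fibre_def)

lemma fibre_sum: "(\<And>t. t \<in> T \<Longrightarrow> w t \<in> fibre d x) \<Longrightarrow> (\<Sum>t\<in>T. w t) \<in> fibre d x"
  by (auto simp: fibre_def sum_fun_apply intro!: sum.neutral)

lemma norm_on_zero: "is_norm_on (fibre d x) Nx \<Longrightarrow> Nx (\<lambda>_. 0) = 0"
  by (simp add: norm_on_eq_zero_iff fibre_def)

lemma norm_on_sum_le:
  assumes N: "is_norm_on (fibre d x) Nx" and w: "\<And>t. t \<in> T \<Longrightarrow> w t \<in> fibre d x"
  shows "Nx (\<Sum>t\<in>T. (\<lambda>i. c t * w t i)) \<le> (\<Sum>t\<in>T. cmod (c t) * Nx (w t))"
  using w
proof (induction T rule: infinite_finite_induct)
  case (insert t T)
  let ?S = "\<Sum>s\<in>T. (\<lambda>i. c s * w s i)"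
  have "Nx (\<Sum>s\<in>insert t T. (\<lambda>i. c s * w s i)) = Nx (\<lambda>i. c t * w t i + ?S i)"
    using insert(1,2) by (simp add: plus_fun_def)
  also have "\<dots> \<le> Nx (\<lambda>i. c t * w t i) + Nx ?S"
    using insert.prems by (intro norm_on_triangle[OF N] fibre_scale fibre_sum) auto
  also have "\<dots> \<le> cmod (c t) * Nx (w t) + (\<Sum>s\<in>T. cmod (c s) * Nx (w s))"
    using insert norm_on_scale[OF N] by (intro add_mono) auto
  also have "\<dots> = (\<Sum>s\<in>insert t T. cmod (c s) * Nx (w s))"
    using insert(1,2) by simp
  finally show ?case .
qed (simp_all add: norm_on_zero[OF N] zero_fun_def)

lemma norm_on_diff_abs_le:
  assumes N: "is_norm_on (fibre d x) Nx" and "v \<in> fibre d x" "w \<in> fibre d x"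
  shows "\<bar>Nx v - Nx w\<bar> \<le> Nx (\<lambda>i. v i - w i)"
proof -
  have diff: "(\<lambda>i. v i - w i) \<in> fibre d x"
    using assms(2,3) by (simp add: fibre_def)
  have "Nx v \<le> Nx (\<lambda>i. v i - w i) + Nx w"
    using norm_on_triangle[OF N diff assms(3)] by simp
  moreover have "Nx w \<le> Nx (\<lambda>i. v i - w i) + Nx v"
  proof -
    have "Nx w = Nx (\<lambda>i. (-1) * (v i - w i) + v i)"
      by simp
    also have "\<dots> \<le> Nx (\<lambda>i. (-1) * (v i - w i)) + Nx v"
      by (rule norm_on_triangle[OF N fibre_scale[OF diff] assms(2)])
    also have "Nx (\<lambda>i. (-1) * (v i - w i)) = Nx (\<lambda>i. v i - w i)"
      using norm_on_scale[OF N diff, of "-1"] by simp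
    finally show ?thesis .
  qed
  ultimately show ?thesis
    by linarith
qed

lemma norm_on_le_l1:
  assumes N: "is_norm_on (fibre d x) Nx"
  obtains M where "\<And>v. v \<in> fibre d x \<Longrightarrow> Nx v \<le> M * (\<Sum>i<d x. cmod (v i))"
proof -
  define e where "e i = (\<lambda>j. if j = i then 1 else (0::complex))" for i :: nat
  define M where "M = (\<Sum>i<d x. Nx (e i))"
  have e: "i < d x \<Longrightarrow> e i \<in> fibre d x" for i
    by (auto simp: e_def fibre_def)
  have "Nx v \<le> M * (\<Sum>i<d x. cmod (v i))" if v: "v \<in> fibre d x" for v
  proof -
    have "(\<Sum>i<d x. (\<lambda>j. v i * e i j)) = v"
      using v by (auto simp: fun_eq_iff sum_fun_apply e_def fibre_def not_less
          if_distrib[of "times _"] cong: if_cong)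
    then have "Nx v \<le> (\<Sum>i<d x. cmod (v i) * Nx (e i))"
      using norm_on_sum_le[OF N, where T = "{..<d x}" and w = e and c = v] e by simp
    also have "\<dots> \<le> (\<Sum>i<d x. cmod (v i) * M)"
      unfolding M_def using e
      by (intro sum_mono mult_left_mono member_le_sum norm_on_nonneg[OF N]) auto
    also have "\<dots> = M * (\<Sum>i<d x. cmod (v i))"
      by (simp add: sum_distrib_left mult.commute)
    finally show ?thesis .
  qed
  then show thesis
    by (rule that)
qed

lemma continuous_on_norm_on:
  assumes N: "is_norm_on (fibre d x) Nx"
  shows "continuous_on (fibre d x) Nx"
proof (rule continuous_on_sequentiallyI)
  obtain M where M: "\<And>v. v \<in> fibre d x \<Longrightarrow> Nx v \<le> M * (\<Sum>i<d x. cmod (v i))"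
    using norm_on_le_l1[OF N] by blast
  fix u a assume u: "\<forall>k. u k \<in> fibre d x" and a: "a \<in> fibre d x" and lim: "u \<longlonglongrightarrow> a"
  have "norm (Nx (u k) - Nx a) \<le> M * (\<Sum>i<d x. cmod (u k i - a i))" for k
  proof -
    have uk: "u k \<in> fibre d x"
      using u by blast
    have "(\<lambda>i. u k i - a i) \<in> fibre d x"
      using uk a by (simp add: fibre_def)
    then show ?thesis
      using order_trans[OF norm_on_diff_abs_le[OF N uk a] M] by simp
  qed
  then have bound: "\<forall>k. norm (Nx (u k) - Nx a) \<le> M * (\<Sum>i<d x. cmod (u k i - a i))"
    by blast
  have "(\<lambda>k. M * (\<Sum>i<d x. cmod (u k i - a i))) \<longlonglongrightarrow> 0"
  proof (intro tendsto_mult_right_zero tendsto_null_sum)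
    fix i
    have "(\<lambda>k. u k i) \<longlonglongrightarrow> a i"
      using lim by (simp add: tendsto_fun_iff)
    then show "(\<lambda>k. cmod (u k i - a i)) \<longlonglongrightarrow> 0"
      by (intro tendsto_norm_zero LIM_zero)
  qed
  then have "(\<lambda>k. Nx (u k) - Nx a) \<longlonglongrightarrow> 0"
    by (rule Lim_null_comparison[OF always_eventually[OF bound]])
  then show "(\<lambda>k. Nx (u k)) \<longlonglongrightarrow> Nx a"
    by (rule LIM_zero_cancel)
qed

lemma compact_fibre_l1_sphere: "compact {v \<in> fibre d x. (\<Sum>i<d x. cmod (v i)) = 1}"
proof -
  define Box where "Box = PiE UNIV (\<lambda>i::nat. if i < d x then cball (0::complex) 1 else {0})"
  have "compactin (product_topology (\<lambda>i. euclidean) UNIV) Box"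
    unfolding Box_def by (subst compactin_PiE) auto
  then have "compact Box"
    by (simp add: euclidean_product_topology)
  moreover have "closed {v::nat \<Rightarrow> complex. (\<Sum>i<d x. cmod (v i)) = 1}"
    by (intro closed_Collect_eq continuous_intros continuous_on_product_coordinates)
  moreover have "{v \<in> fibre d x. (\<Sum>i<d x. cmod (v i)) = 1} = Box \<inter> {v. (\<Sum>i<d x. cmod (v i)) = 1}"
  proof safe
    fix v assume v: "v \<in> fibre d x" "(\<Sum>i<d x. cmod (v i)) = 1"
    have "cmod (v i) \<le> 1" if "i < d x" for i
      using that v(2) member_le_sum[of i "{..<d x}" "\<lambda>i. cmod (v i)"] by simp
    then show "v \<in> Box"
      using v(1) by (auto simp: Box_def fibre_def PiE_iff dist_norm)
  next
    fix v assume v: "v \<in> Box"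
    have "v i = 0" if "d x \<le> i" for i
    proof -
      have "v i \<in> (if i < d x then cball 0 1 else {0})"
        using v by (simp add: Box_def PiE_iff)
      then show ?thesis
        using that by simp
    qed
    then show "v \<in> fibre d x"
      by (simp add: fibre_def)
  qed
  ultimately show ?thesis
    using compact_Int_closed by metis
qed

lemma l1_le_norm_on:
  assumes N: "is_norm_on (fibre d x) Nx"
  obtains c where "c > 0" "\<And>v. v \<in> fibre d x \<Longrightarrow> (\<Sum>i<d x. cmod (v i)) \<le> c * Nx v"
proof (cases "d x = 0")
  case True
  then show thesis
    using that[of 1] norm_on_nonneg[OF N] by simp
next
  case False
  define Sph where "Sph = {v \<in> fibre d x. (\<Sum>i<d x. cmod (v i)) = 1}"
  have "(\<lambda>j. if j = 0 then 1 else 0) \<in> Sph"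
    using False by (simp add: Sph_def fibre_def if_distrib[of cmod] sum.delta cong: if_cong)
  moreover have "compact Sph"
    unfolding Sph_def by (rule compact_fibre_l1_sphere)
  moreover have "continuous_on Sph Nx"
    by (rule continuous_on_subset[OF continuous_on_norm_on[OF N]]) (auto simp: Sph_def)
  ultimately obtain v0 where v0: "v0 \<in> Sph" "\<And>v. v \<in> Sph \<Longrightarrow> Nx v0 \<le> Nx v"
    using continuous_attains_inf[of Sph Nx] by blast
  have "v0 \<in> fibre d x" "v0 \<noteq> (\<lambda>_. 0)"
    using v0(1) False by (auto simp: Sph_def)
  then have m: "Nx v0 > 0"
    using norm_on_nonneg[OF N] norm_on_eq_zero_iff[OF N] by (simp add: less_le)
  show thesis
  proof (rule that[of "1 / Nx v0"])
    show "1 / Nx v0 > 0"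
      using m by simp
    fix v assume v: "v \<in> fibre d x"
    define s where "s = (\<Sum>i<d x. cmod (v i))"
    show "s \<le> 1 / Nx v0 * Nx v"
    proof (cases "s = 0")
      case True
      then show ?thesis
        using norm_on_nonneg[OF N v] m by simp
    next
      case False
      then have s: "s > 0"
        unfolding s_def by (simp add: less_le sum_nonneg)
      have "(\<Sum>i<d x. cmod (complex_of_real (1 / s) * v i)) = (\<Sum>i<d x. 1 / s * cmod (v i))"
        using s by (intro sum.cong) (simp_all add: norm_mult norm_divide)
      also have "\<dots> = 1"
        using s by (simp add: s_def sum_divide_distrib[symmetric])
      finally have "(\<lambda>i. complex_of_real (1 / s) * v i) \<in> Sph"
        using v by (simp add: Sph_def fibre_def)
      then have "Nx v0 \<le> Nx (\<lambda>i. complex_of_real (1 / s) * v i)"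
        by (rule v0(2))
      also have "\<dots> = Nx v / s"
        using s by (simp only: norm_on_scale[OF N v]) (simp add: norm_divide)
      finally show ?thesis
        using m s by (simp add: field_simps)
    qed
  qed
qed

lemma seminorm_K_nonneg:
  assumes "\<And>x. is_norm_on (fibre d x) (N x)" "f \<in> sections d"
  shows "0 \<le> seminorm_K N K f"
  unfolding seminorm_K_def
  using assms(2) norm_on_nonneg[OF assms(1)] by (intro sum_nonneg) (auto simp: sections_def)

lemma norm_le_seminorm_K:
  assumes "\<And>x. is_norm_on (fibre d x) (N x)" "f \<in> sections d" "finite K" "x \<in> K"
  shows "N x (f x) \<le> seminorm_K N K f"
  unfolding seminorm_K_def
  using assms(2-4) norm_on_nonneg[OF assms(1)] by (intro member_le_sum) (auto simp: sections_def)

lemma scale_sec_sections: "f \<in> sections d \<Longrightarrow> scale_sec e f \<in> sections d"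
  by (simp add: scale_sec_def sections_def fibre_def)

lemma seminorm_K_scale_sec:
  assumes "\<And>x. is_norm_on (fibre d x) (N x)" "f \<in> sections d" "0 \<le> e"
  shows "seminorm_K N K (scale_sec e f) = e * seminorm_K N K f"
  unfolding seminorm_K_def scale_sec_def sum_distrib_left
  using assms(2,3) norm_on_scale[OF assms(1)] by (intro sum.cong refl) (auto simp: sections_def)

lemma pairing_le_seminorm_K:
  assumes norms: "\<And>x. is_norm_on (fibre d x) (N x)"
    and phi: "phi \<in> csections_dual d" and K: "finite K" "supp_sec phi \<subseteq> K"
  shows "\<exists>C\<ge>0. \<forall>g\<in>sections d. cmod (pairing d phi g) \<le> C * seminorm_K N K g"
proof -
  have "\<forall>x. \<exists>c. c > 0 \<and> (\<forall>v\<in>fibre d x. (\<Sum>i<d x. cmod (v i)) \<le> c * N x v)"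
  proof
    fix x
    obtain c where "c > 0" "\<And>v. v \<in> fibre d x \<Longrightarrow> (\<Sum>i<d x. cmod (v i)) \<le> c * N x v"
      using l1_le_norm_on[OF norms[of x]] by blast
    then show "\<exists>c. c > 0 \<and> (\<forall>v\<in>fibre d x. (\<Sum>i<d x. cmod (v i)) \<le> c * N x v)"
      by blast
  qed
  then obtain c where c: "\<forall>x. c x > 0 \<and> (\<forall>v\<in>fibre d x. (\<Sum>i<d x. cmod (v i)) \<le> c x * N x v)"
    by (rule choice[THEN exE])
  let ?P = "supp_sec phi"
  have P: "finite ?P"
    using phi by (rule csections_dual_finite_supp)
  define C where "C = (\<Sum>x\<in>?P. \<Sum>i<d x. cmod (phi x i) * c x)"
  have "cmod (pairing d phi g) \<le> C * seminorm_K N K g" if g: "g \<in> sections d" for g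
  proof -
    have coordinate: "cmod (g x i) \<le> c x * seminorm_K N K g" if "x \<in> K" "i < d x" for x i
    proof -
      have gx: "g x \<in> fibre d x"
        using g by (simp add: sections_def)
      have "cmod (g x i) \<le> (\<Sum>j<d x. cmod (g x j))"
        using that(2) by (intro member_le_sum) auto
      also have "\<dots> \<le> c x * N x (g x)"
        using c gx by blast
      also have "\<dots> \<le> c x * seminorm_K N K g"
        using c norm_le_seminorm_K[OF norms g K(1) that(1)] by (simp add: less_imp_le)
      finally show ?thesis .
    qed
    have "cmod (pairing d phi g) \<le> (\<Sum>x\<in>?P. \<Sum>i<d x. cmod (phi x i) * cmod (g x i))"
      unfolding pairing_eq_sum[OF P order_refl]
      by (intro order_trans[OF norm_sum] sum_mono) (simp add: norm_mult order_trans[OF norm_sum])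
    also have "\<dots> \<le> (\<Sum>x\<in>?P. \<Sum>i<d x. cmod (phi x i) * (c x * seminorm_K N K g))"
      using K(2) coordinate by (intro sum_mono mult_left_mono) auto
    also have "\<dots> = C * seminorm_K N K g"
      by (simp add: C_def sum_distrib_right mult.assoc)
    finally show ?thesis .
  qed
  moreover have "C \<ge> 0"
    unfolding C_def using c by (intro sum_nonneg mult_nonneg_nonneg) (auto simp: less_imp_le)
  ultimately show ?thesis
    by blast
qed

lemma seminorm_K_combination_le:
  assumes norms: "\<And>x. is_norm_on (fibre d x) (N x)"
    and u: "\<And>t. u t \<in> sections d"
    and f: "\<forall>x\<in>K. \<forall>i. f x i = (\<Sum>t\<in>T. c t * u t x i)"
  shows "seminorm_K N K f \<le> (\<Sum>t\<in>T. cmod (c t) * seminorm_K N K (u t))"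
proof -
  have "N x (f x) \<le> (\<Sum>t\<in>T. cmod (c t) * N x (u t x))" if "x \<in> K" for x
  proof -
    have "f x = (\<Sum>t\<in>T. (\<lambda>i. c t * u t x i))"
      using f that by (auto simp: fun_eq_iff sum_fun_apply)
    then show ?thesis
      using u by (simp add: norm_on_sum_le[OF norms] sections_def)
  qed
  then have "seminorm_K N K f \<le> (\<Sum>x\<in>K. \<Sum>t\<in>T. cmod (c t) * N x (u t x))"
    unfolding seminorm_K_def by (rule sum_mono)
  also have "\<dots> = (\<Sum>t\<in>T. cmod (c t) * seminorm_K N K (u t))"
    by (simp add: seminorm_K_def sum_distrib_left sum.swap[of _ K])
  finally show ?thesis .
qed

lemma finite_rank_seminorm_K_bound:
  assumes norms: "\<And>x. is_norm_on (fibre d x) (N x)"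
    and T: "finite T" "\<And>t. t \<in> T \<Longrightarrow> p t \<in> csections_dual d"
    and K': "finite K'" "\<And>t. t \<in> T \<Longrightarrow> supp_sec (p t) \<subseteq> K'"
    and u: "\<And>t. u t \<in> sections d"
  obtains C where "C \<ge> 0"
    "\<And>g f. g \<in> sections d \<Longrightarrow> \<forall>x\<in>K. \<forall>i. f x i = (\<Sum>t\<in>T. pairing d (p t) g * u t x i) \<Longrightarrow>
      seminorm_K N K f \<le> C * seminorm_K N K' g"
proof -
  have "\<forall>t\<in>T. \<exists>C\<ge>0. \<forall>g\<in>sections d. cmod (pairing d (p t) g) \<le> C * seminorm_K N K' g"
    using T(2) K' by (blast intro: pairing_le_seminorm_K[OF norms])
  then have "\<exists>Ct. \<forall>t\<in>T. Ct t \<ge> 0 \<and>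
      (\<forall>g\<in>sections d. cmod (pairing d (p t) g) \<le> Ct t * seminorm_K N K' g)"
    by (rule bchoice)
  then obtain Ct where Ct: "\<forall>t\<in>T. Ct t \<ge> 0 \<and>
      (\<forall>g\<in>sections d. cmod (pairing d (p t) g) \<le> Ct t * seminorm_K N K' g)"
    by blast
  define C where "C = (\<Sum>t\<in>T. Ct t * seminorm_K N K (u t))"
  show thesis
  proof (rule that)
    show "C \<ge> 0"
      unfolding C_def using Ct seminorm_K_nonneg[OF norms u]
      by (intro sum_nonneg mult_nonneg_nonneg) auto
    fix g f
    assume g: "g \<in> sections d" and f: "\<forall>x\<in>K. \<forall>i. f x i = (\<Sum>t\<in>T. pairing d (p t) g * u t x i)"
    have "seminorm_K N K f \<le> (\<Sum>t\<in>T. cmod (pairing d (p t) g) * seminorm_K N K (u t))"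
      using f by (rule seminorm_K_combination_le[OF norms u])
    also have "\<dots> \<le> (\<Sum>t\<in>T. Ct t * seminorm_K N K' g * seminorm_K N K (u t))"
      using Ct g by (intro sum_mono mult_right_mono seminorm_K_nonneg[OF norms u]) auto
    also have "\<dots> = C * seminorm_K N K' g"
      by (simp add: C_def sum_distrib_left mult_ac)
    finally show "seminorm_K N K f \<le> C * seminorm_K N K' g" .
  qed
qed

lemma scaled_ball_subset_image:
  assumes norms: "\<And>x. is_norm_on (fibre d x) (N x)" and "C \<ge> 0"
    and solve: "\<And>g. g \<in> sections d \<Longrightarrow>
      \<exists>f\<in>sections d. A f = g \<and> seminorm_K N K f \<le> C * seminorm_K N K' g"
  shows "scale_sec (1 / (C + 1)) ` U_ball d N K' \<subseteq> A ` U_ball d N K"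
proof
  fix g assume "g \<in> scale_sec (1 / (C + 1)) ` U_ball d N K'"
  then obtain h where h: "h \<in> sections d" "seminorm_K N K' h \<le> 1" "g = scale_sec (1 / (C + 1)) h"
    by (auto simp: U_ball_def)
  then have g: "g \<in> sections d"
    by (simp add: scale_sec_sections)
  then obtain f where f: "f \<in> sections d" "A f = g" "seminorm_K N K f \<le> C * seminorm_K N K' g"
    using solve by blast
  have "seminorm_K N K f \<le> C * (1 / (C + 1) * seminorm_K N K' h)"
    using f(3) h assms(2) seminorm_K_scale_sec[OF norms h(1)] by simp
  also have "\<dots> \<le> C * (1 / (C + 1))"
    using assms(2) h(2) by (intro mult_left_mono mult_left_le) auto
  also have "\<dots> \<le> 1"
    using assms(2) by (simp add: field_simps)
  finally have "f \<in> U_ball d N K"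
    using f(1) by (simp add: U_ball_def)
  with f(2) show "g \<in> A ` U_ball d N K"
    by blast
qed

theorem lemma3p3:
  fixes d :: "'x::countable \<Rightarrow> nat"
    and N :: "'x \<Rightarrow> (nat \<Rightarrow> complex) \<Rightarrow> real"
    and A :: "('x \<Rightarrow> nat \<Rightarrow> complex) \<Rightarrow> ('x \<Rightarrow> nat \<Rightarrow> complex)"
    and K :: "'x set"
  assumes norms: "\<And>x. is_norm_on (fibre d x) (N x)"
    and maps: "A ` sections d \<subseteq> sections d"
    and lin: "linear_on_sections d A"
    and cont: "continuous_on (sections d) A"
    and inj: "inj_on (dual_op d A) (csections_dual d)"
    and K: "finite K" "K \<noteq> {}"
  shows "\<exists>e>0. \<exists>K'. finite K' \<and> K' \<noteq> {} \<and>
           scale_sec e ` U_ball d N K' \<subseteq> A ` U_ball d N K"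
proof -
  interpret continuous_section_operator d A
    using maps lin cont by unfold_locales
  obtain T :: "'x sec set" and p u where T: "finite T" "\<And>t. t \<in> T \<Longrightarrow> p t \<in> csections_dual d"
    and u: "\<And>t. u t \<in> sections d"
    and solve: "\<And>g. g \<in> sections d \<Longrightarrow>
      \<exists>f\<in>sections d. A f = g \<and> (\<forall>x\<in>K. \<forall>i. f x i = (\<Sum>t\<in>T. pairing d (p t) g * u t x i))"
    using finite_rank_preimage[OF inj K(1)] by blast
  define K' where "K' = K \<union> (\<Union>t\<in>T. supp_sec (p t))"
  have "finite (supp_sec (p t))" if "t \<in> T" for t
    using T(2)[OF that] by (rule csections_dual_finite_supp)
  with K T(1) have K': "finite K'" "K' \<noteq> {}"
    by (auto simp: K'_def)
  obtain C where C: "C \<ge> 0"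
    "\<And>g f. g \<in> sections d \<Longrightarrow> \<forall>x\<in>K. \<forall>i. f x i = (\<Sum>t\<in>T. pairing d (p t) g * u t x i) \<Longrightarrow>
      seminorm_K N K f \<le> C * seminorm_K N K' g"
    using finite_rank_seminorm_K_bound[where T = T and p = p and u = u, OF norms T K'(1) _ u]
    unfolding K'_def by blast
  have "\<exists>f\<in>sections d. A f = g \<and> seminorm_K N K f \<le> C * seminorm_K N K' g"
    if "g \<in> sections d" for g
    using solve[OF that] C(2)[OF that] by blast
  then have "scale_sec (1 / (C + 1)) ` U_ball d N K' \<subseteq> A ` U_ball d N K"
    by (rule scaled_ball_subset_image[OF norms C(1)])
  with K' C(1) show ?thesis
    by (intro exI[of _ "1 / (C + 1)"]) auto
qed

end
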